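(* Let $M,N$ be sharp, integral monoids, $\Gamma$ an $M$-metrised graph, $f:M\to N$ a monoid homomorphism, and $\Gamma'$ the edge contraction of $\Gamma$ along $f$. Then $\operatorname{dgon}(\Gamma')\le\operatorname{dgon}(\Gamma)$.
   Context: Monoids are commutative, sharp (only unit $0$), integral (cancellative), with groupification; $\langle m\rangle=\{km:k\in\mathbb Z\}$ and for $x=km$, $m\ne0$, $x/m:=k$. A graph is $(X,r,i)$, $X$ finite, $r$ idempotent, $i$ an involution, $i(x)=x\iff r(x)=x$; vertices $V$ = fixed points, half-edges $H=X\setminus V$, edges $\{e,i(e)\}$ joining $r(e),r(i(e))$, $H_v=\{e\in H:r(e)=v\}$; graphs are connected. An $M$-metrised graph adds $l:X\to M$ with $l(i(x))=l(x)$, $l(x)=0\iff x\in V$. Divisors: free abelian group on $V$, pointwise order; $\operatorname{Div}^k_+$ = effective divisors of degree $k$. $\operatorname{PL}(\Gamma)=\{g:V\to M^{gp}: g(r(e))-g(r(i(e)))\in\langle l(e)\rangle\ \forall e\in H\}$; $\Delta(g)=\sum_{v}\big(\sum_{e\in H_v}\frac{g(v)-g(r(i(e)))}{l(e)}\big)[v]$; $D\sim D'$ iff $D-D'\in\Delta(\operatorname{PL}(\Gamma))$; $|D|=\{E\ge0:E\sim D\}$; $r(D)=\max\{k\in\mathbb Z:|D-F|\ne\emptyset\ \forall F\in\operatorname{Div}^k_+(\Gamma)\}$; $\operatorname{dgon}(\Gamma)=\min\{\deg D: r(D)\ge1\}$. The edge contraction of $\Gamma$ along $f$ is the $N$-metrised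 graph obtained as the quotient of $X$ by the equivalence relation generated by $e\sim r(e)\sim i(e)\sim r(i(e))$ for every $e\in H$ with $f(l(e))=0$, with induced $r,i$ and length $f\circ l$. *)

theory Defs
  imports Main
begin

(* A commutative integral monoid is represented as a submonoid M of an abelian group;
   its groupification is the subgroup {a - b | a, b in M}. *)

definition sharp_integral_monoid :: "'a::ab_group_add set \<Rightarrow> bool" where
  "sharp_integral_monoid M \<longleftrightarrow>
     0 \<in> M \<and> (\<forall>a\<in>M. \<forall>b\<in>M. a + b \<in> M) \<and> (\<forall>a\<in>M. - a \<in> M \<longrightarrow> a = 0)"

definition gp :: "'a::ab_group_add set \<Rightarrow> 'a set" where
  "gp M = {a - b | a b. a \<in> M \<and> b \<in> M}"

definition monoid_hom :: "'a::ab_group_add set \<Rightarrow> 'b::ab_group_add set \<Rightarrow> ('a \<Rightarrow> 'b) \<Rightarrow> bool" where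
  "monoid_hom M N f \<longleftrightarrow> f ` M \<subseteq> N \<and> f 0 = 0 \<and> (\<forall>a\<in>M. \<forall>b\<in>M. f (a + b) = f a + f b)"

definition zsmult :: "int \<Rightarrow> 'a::ab_group_add \<Rightarrow> 'a" where
  "zsmult k m = (if 0 \<le> k then ((plus m) ^^ nat k) 0 else - (((plus m) ^^ nat (- k)) 0))"

definition zspan :: "'a::ab_group_add \<Rightarrow> 'a set" where
  "zspan m = range (\<lambda>k. zsmult k m)"

definition zdiv :: "'a::ab_group_add \<Rightarrow> 'a \<Rightarrow> int" where
  "zdiv x m = (THE k. x = zsmult k m)"

definition vertices :: "'x set \<Rightarrow> ('x \<Rightarrow> 'x) \<Rightarrow> 'x set" where
  "vertices X r = {x \<in> X. r x = x}"

definition halfedges :: "'x set \<Rightarrow> ('x \<Rightarrow> 'x) \<Rightarrow> 'x set" where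
  "halfedges X r = X - vertices X r"

definition halfedges_at :: "'x set \<Rightarrow> ('x \<Rightarrow> 'x) \<Rightarrow> 'x \<Rightarrow> 'x set" where
  "halfedges_at X r v = {e \<in> halfedges X r. r e = v}"

definition adjacency :: "'x set \<Rightarrow> ('x \<Rightarrow> 'x) \<Rightarrow> ('x \<Rightarrow> 'x) \<Rightarrow> ('x \<times> 'x) set" where
  "adjacency X r i = {(r e, r (i e)) | e. e \<in> halfedges X r}"

definition is_graph :: "'x set \<Rightarrow> ('x \<Rightarrow> 'x) \<Rightarrow> ('x \<Rightarrow> 'x) \<Rightarrow> bool" where
  "is_graph X r i \<longleftrightarrow>
     finite X \<and> r ` X \<subseteq> X \<and> i ` X \<subseteq> X \<and>
     (\<forall>x\<in>X. r (r x) = r x) \<and> (\<forall>x\<in>X. i (i x) = x) \<and>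
     (\<forall>x\<in>X. i x = x \<longleftrightarrow> r x = x) \<and>
     vertices X r \<noteq> {} \<and>
     (\<forall>u\<in>vertices X r. \<forall>w\<in>vertices X r. (u, w) \<in> (adjacency X r i)\<^sup>*)"

definition metrised_graph ::
  "'a::ab_group_add set \<Rightarrow> 'x set \<Rightarrow> ('x \<Rightarrow> 'x) \<Rightarrow> ('x \<Rightarrow> 'x) \<Rightarrow> ('x \<Rightarrow> 'a) \<Rightarrow> bool" where
  "metrised_graph M X r i l \<longleftrightarrow> is_graph X r i \<and>
     (\<forall>x\<in>X. l x \<in> M \<and> l (i x) = l x \<and> (l x = 0 \<longleftrightarrow> x \<in> vertices X r))"

definition divisors :: "'x set \<Rightarrow> ('x \<Rightarrow> 'x) \<Rightarrow> ('x \<Rightarrow> int) set" where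
  "divisors X r = {D. \<forall>x. x \<notin> vertices X r \<longrightarrow> D x = 0}"

definition deg :: "'x set \<Rightarrow> ('x \<Rightarrow> 'x) \<Rightarrow> ('x \<Rightarrow> int) \<Rightarrow> int" where
  "deg X r D = sum D (vertices X r)"

definition eff_divisors :: "'x set \<Rightarrow> ('x \<Rightarrow> 'x) \<Rightarrow> int \<Rightarrow> ('x \<Rightarrow> int) set" where
  "eff_divisors X r k = {D \<in> divisors X r. (\<forall>x. 0 \<le> D x) \<and> deg X r D = k}"

definition PL ::
  "'a::ab_group_add set \<Rightarrow> 'x set \<Rightarrow> ('x \<Rightarrow> 'x) \<Rightarrow> ('x \<Rightarrow> 'x) \<Rightarrow> ('x \<Rightarrow> 'a) \<Rightarrow> ('x \<Rightarrow> 'a) set" where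
  "PL M X r i l = {g. (\<forall>v\<in>vertices X r. g v \<in> gp M) \<and> (\<forall>x. x \<notin> vertices X r \<longrightarrow> g x = 0) \<and>
       (\<forall>e\<in>halfedges X r. g (r e) - g (r (i e)) \<in> zspan (l e))}"

definition laplacian ::
  "'x set \<Rightarrow> ('x \<Rightarrow> 'x) \<Rightarrow> ('x \<Rightarrow> 'x) \<Rightarrow> ('x \<Rightarrow> 'a::ab_group_add) \<Rightarrow> ('x \<Rightarrow> 'a) \<Rightarrow> ('x \<Rightarrow> int)" where
  "laplacian X r i l g = (\<lambda>v. if v \<in> vertices X r
      then (\<Sum>e\<in>halfedges_at X r v. zdiv (g v - g (r (i e))) (l e)) else 0)"

definition lin_equiv ::
  "'a::ab_group_add set \<Rightarrow> 'x set \<Rightarrow> ('x \<Rightarrow> 'x) \<Rightarrow> ('x \<Rightarrow> 'x) \<Rightarrow> ('x \<Rightarrow> 'a)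
    \<Rightarrow> ('x \<Rightarrow> int) \<Rightarrow> ('x \<Rightarrow> int) \<Rightarrow> bool" where
  "lin_equiv M X r i l D D' \<longleftrightarrow> D \<in> divisors X r \<and> D' \<in> divisors X r \<and>
     (\<exists>g\<in>PL M X r i l. D - D' = laplacian X r i l g)"

definition linsys ::
  "'a::ab_group_add set \<Rightarrow> 'x set \<Rightarrow> ('x \<Rightarrow> 'x) \<Rightarrow> ('x \<Rightarrow> 'x) \<Rightarrow> ('x \<Rightarrow> 'a)
    \<Rightarrow> ('x \<Rightarrow> int) \<Rightarrow> ('x \<Rightarrow> int) set" where
  "linsys M X r i l D = {E \<in> divisors X r. (\<forall>x. 0 \<le> E x) \<and> lin_equiv M X r i l E D}"

definition rank ::
  "'a::ab_group_add set \<Rightarrow> 'x set \<Rightarrow> ('x \<Rightarrow> 'x) \<Rightarrow> ('x \<Rightarrow> 'x) \<Rightarrow> ('x \<Rightarrow> 'a)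
    \<Rightarrow> ('x \<Rightarrow> int) \<Rightarrow> int" where
  "rank M X r i l D = (GREATEST k::int. \<forall>F\<in>eff_divisors X r k. linsys M X r i l (D - F) \<noteq> {})"

definition dgon ::
  "'a::ab_group_add set \<Rightarrow> 'x set \<Rightarrow> ('x \<Rightarrow> 'x) \<Rightarrow> ('x \<Rightarrow> 'x) \<Rightarrow> ('x \<Rightarrow> 'a) \<Rightarrow> int" where
  "dgon M X r i l = (LEAST d::int. \<exists>D\<in>divisors X r. deg X r D = d \<and> 1 \<le> rank M X r i l D)"

definition contr_rel ::
  "('a \<Rightarrow> 'b::zero) \<Rightarrow> 'x set \<Rightarrow> ('x \<Rightarrow> 'x) \<Rightarrow> ('x \<Rightarrow> 'x) \<Rightarrow> ('x \<Rightarrow> 'a) \<Rightarrow> ('x \<times> 'x) set" where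
  "contr_rel f X r i l =
     (let B = {(e, y) | e y. e \<in> halfedges X r \<and> f (l e) = 0 \<and> y \<in> {r e, i e, r (i e)}}
      in Id_on X \<union> (B \<union> B\<inverse>)\<^sup>+)"

definition contr_X :: "('a \<Rightarrow> 'b::zero) \<Rightarrow> 'x set \<Rightarrow> ('x \<Rightarrow> 'x) \<Rightarrow> ('x \<Rightarrow> 'x) \<Rightarrow> ('x \<Rightarrow> 'a) \<Rightarrow> 'x set set" where
  "contr_X f X r i l = X // contr_rel f X r i l"

definition contr_r :: "('a \<Rightarrow> 'b::zero) \<Rightarrow> 'x set \<Rightarrow> ('x \<Rightarrow> 'x) \<Rightarrow> ('x \<Rightarrow> 'x) \<Rightarrow> ('x \<Rightarrow> 'a) \<Rightarrow> 'x set \<Rightarrow> 'x set" where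
  "contr_r f X r i l C = contr_rel f X r i l `` (r ` C)"

definition contr_i :: "('a \<Rightarrow> 'b::zero) \<Rightarrow> 'x set \<Rightarrow> ('x \<Rightarrow> 'x) \<Rightarrow> ('x \<Rightarrow> 'x) \<Rightarrow> ('x \<Rightarrow> 'a) \<Rightarrow> 'x set \<Rightarrow> 'x set" where
  "contr_i f X r i l C = contr_rel f X r i l `` (i ` C)"

definition contr_l :: "('a \<Rightarrow> 'b::zero) \<Rightarrow> 'x set \<Rightarrow> ('x \<Rightarrow> 'x) \<Rightarrow> ('x \<Rightarrow> 'x) \<Rightarrow> ('x \<Rightarrow> 'a) \<Rightarrow> 'x set \<Rightarrow> 'b" where
  "contr_l f X r i l C = f (l (SOME x. x \<in> C))"

end

theory Submission
  imports Defs
begin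

text \<open>Pushing divisors forward along the quotient map on vertices preserves degree and
effectivity, and every effective divisor of the contraction lifts. A PL function \<open>g\<close> on
\<open>\<Gamma>\<close> induces one on \<open>\<Gamma>'\<close> by composing with the extension of \<open>f\<close> to \<open>M\<^sup>g\<^sup>p\<close>; it is
well defined because \<open>f\<close> kills the lengths of contracted edges, and its Laplacian is the
push-forward of \<open>\<Delta>(g)\<close>, since the slopes along a contracted edge cancel in pairs. So
push-forward maps divisors of rank \<open>\<ge> 1\<close> to divisors of rank \<open>\<ge> 1\<close> of the same degree.\<close>

definition nsmult :: "nat \<Rightarrow> 'a::ab_group_add \<Rightarrow> 'a" where
  "nsmult n m = ((plus m) ^^ n) 0"

lemma nsmult_0 [simp]: "nsmult 0 m = 0"
  by (simp add: nsmult_def)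

lemma nsmult_Suc: "nsmult (Suc n) m = m + nsmult n m"
  by (simp add: nsmult_def)

lemma nsmult_add: "nsmult (a + b) m = nsmult a m + nsmult b m"
  by (induction a) (simp_all add: nsmult_Suc add.assoc)

lemma nsmult_zero [simp]: "nsmult n (0::'a::ab_group_add) = 0"
  by (induction n) (simp_all add: nsmult_Suc)

lemma zsmult_eq_nsmult_diff: "zsmult k m = nsmult (nat k) m - nsmult (nat (- k)) m"
  by (simp add: zsmult_def nsmult_def)

lemma zsmult_of_nat_diff: "zsmult (int p - int q) m = nsmult p m - nsmult q m"
proof -
  have "nat (int p - int q) + q = p + nat (- (int p - int q))" by simp
  then have "nsmult (nat (int p - int q)) m + nsmult q m = nsmult p m + nsmult (nat (- (int p - int q))) m"
    by (metis nsmult_add)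
  then show ?thesis unfolding zsmult_eq_nsmult_diff by (simp add: algebra_simps)
qed

lemma zsmult_add: "zsmult (a + b) m = zsmult a m + zsmult b m"
proof -
  have "a + b = int (nat a + nat b) - int (nat (- a) + nat (- b))" by simp
  then have "zsmult (a + b) m = nsmult (nat a + nat b) m - nsmult (nat (- a) + nat (- b)) m"
    by (metis zsmult_of_nat_diff)
  then show ?thesis unfolding zsmult_eq_nsmult_diff by (simp add: nsmult_add algebra_simps)
qed

lemma zsmult_minus: "zsmult (- a) m = - zsmult a m"
  unfolding zsmult_eq_nsmult_diff by simp

lemma zsmult_diff: "zsmult (a - b) m = zsmult a m - zsmult b m"
  using zsmult_add[of a "- b" m] zsmult_minus[of b m] by simp

lemma zsmult_0 [simp]: "zsmult 0 m = 0"
  by (simp add: zsmult_def)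

lemma zsmult_zero [simp]: "zsmult k (0::'a::ab_group_add) = 0"
  by (simp add: zsmult_eq_nsmult_diff)

definition torsion_free :: "'a::ab_group_add \<Rightarrow> bool" where
  "torsion_free m \<longleftrightarrow> (\<forall>k. zsmult k m = 0 \<longrightarrow> k = 0)"

lemma zdiv_zsmult:
  assumes "torsion_free m"
  shows "zdiv (zsmult k m) m = k"
  unfolding zdiv_def
proof (rule the_equality)
  fix j
  assume "zsmult k m = zsmult j m"
  then have "zsmult (k - j) m = 0" by (simp add: zsmult_diff)
  then show "j = k" using assms unfolding torsion_free_def by auto
qed simp

lemma nsmult_in_monoid:
  assumes "sharp_integral_monoid M" "m \<in> M"
  shows "nsmult n m \<in> M"
  using assms by (induction n) (auto simp: nsmult_Suc sharp_integral_monoid_def)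

lemma torsion_free_if_sharp:
  assumes M: "sharp_integral_monoid M" and m: "m \<in> M" "m \<noteq> 0"
  shows "torsion_free m"
  unfolding torsion_free_def
proof (intro allI impI)
  fix k
  assume k: "zsmult k m = 0"
  have nsmult_nonzero: "nsmult (Suc n) m \<noteq> 0" for n
  proof
    assume "nsmult (Suc n) m = 0"
    then have "- m = nsmult n m" by (simp add: nsmult_Suc add_eq_0_iff)
    then have "- m \<in> M" using nsmult_in_monoid[OF M m(1)] by simp
    then show False using M m unfolding sharp_integral_monoid_def by auto
  qed
  have "zsmult k m = nsmult (nat \<bar>k\<bar>) m \<or> zsmult k m = - nsmult (nat \<bar>k\<bar>) m"
    unfolding zsmult_eq_nsmult_diff by (cases "k \<ge> 0") auto
  then have "nsmult (nat \<bar>k\<bar>) m = 0" using k by auto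
  then show "k = 0" using nsmult_nonzero by (cases "nat \<bar>k\<bar>") auto
qed

lemma monoid_hom_nsmult:
  assumes "monoid_hom M N f" "sharp_integral_monoid M" "m \<in> M"
  shows "f (nsmult n m) = nsmult n (f m)"
proof (induction n)
  case (Suc n)
  have "nsmult n m \<in> M" using nsmult_in_monoid assms(2,3) .
  then show ?case using Suc assms by (simp add: nsmult_Suc monoid_hom_def)
qed (use assms in \<open>simp add: monoid_hom_def\<close>)

text \<open>Off \<open>gp M\<close> the value is unspecified (\<open>SOME\<close> of an empty predicate).\<close>

definition gp_ext :: "'a::ab_group_add set \<Rightarrow> ('a \<Rightarrow> 'b::ab_group_add) \<Rightarrow> 'a \<Rightarrow> 'b" where
  "gp_ext M f x = (SOME y. \<exists>a\<in>M. \<exists>b\<in>M. x = a - b \<and> y = f a - f b)"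

lemma gp_ext_diff:
  assumes f: "monoid_hom M N f" and ab: "a \<in> M" "b \<in> M"
  shows "gp_ext M f (a - b) = f a - f b"
proof -
  have "\<exists>y. \<exists>a'\<in>M. \<exists>b'\<in>M. a - b = a' - b' \<and> y = f a' - f b'"
    using ab by blast
  then have "\<exists>a'\<in>M. \<exists>b'\<in>M. a - b = a' - b' \<and> gp_ext M f (a - b) = f a' - f b'"
    unfolding gp_ext_def by (rule someI_ex)
  then obtain a' b' where a'b': "a' \<in> M" "b' \<in> M" "a - b = a' - b'"
      and ext: "gp_ext M f (a - b) = f a' - f b'"
    by blast
  have "a + b' = a' + b" using a'b'(3) by (simp add: algebra_simps)
  moreover have "f (a + b') = f a + f b'" "f (a' + b) = f a' + f b"
    using f ab a'b'(1,2) unfolding monoid_hom_def by auto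
  ultimately have "f a + f b' = f a' + f b" by simp
  then have "f a - f b = f a' - f b'"
    by (simp add: algebra_simps)
  then show ?thesis using ext by simp
qed

lemma gp_ext_minus:
  assumes f: "monoid_hom M N f" and M: "sharp_integral_monoid M" and xy: "x \<in> gp M" "y \<in> gp M"
  shows "gp_ext M f (x - y) = gp_ext M f x - gp_ext M f y"
proof -
  obtain a b c d where abcd: "a \<in> M" "b \<in> M" "c \<in> M" "d \<in> M"
      and x: "x = a - b" and y: "y = c - d"
    using xy unfolding gp_def by blast
  have "x - y = (a + d) - (b + c)" using x y by (simp add: algebra_simps)
  moreover have "a + d \<in> M" "b + c \<in> M"
    using abcd M unfolding sharp_integral_monoid_def by auto
  ultimately have "gp_ext M f (x - y) = f (a + d) - f (b + c)"
    using gp_ext_diff[OF f] by simp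
  also have "\<dots> = (f a - f b) - (f c - f d)"
    using f abcd unfolding monoid_hom_def by (simp add: algebra_simps)
  also have "\<dots> = gp_ext M f x - gp_ext M f y"
    using gp_ext_diff[OF f] abcd x y by simp
  finally show ?thesis .
qed

lemma gp_ext_in_gp:
  assumes f: "monoid_hom M N f" and x: "x \<in> gp M"
  shows "gp_ext M f x \<in> gp N"
proof -
  obtain a b where ab: "a \<in> M" "b \<in> M" "x = a - b" using x unfolding gp_def by blast
  then have "f a \<in> N" "f b \<in> N" using f unfolding monoid_hom_def by auto
  then show ?thesis using gp_ext_diff[OF f ab(1,2)] ab(3) unfolding gp_def by blast
qed

lemma gp_ext_zsmult:
  assumes f: "monoid_hom M N f" and M: "sharp_integral_monoid M" and m: "m \<in> M"
  shows "gp_ext M f (zsmult k m) = zsmult k (f m)"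
  using gp_ext_diff[OF f nsmult_in_monoid[OF M m] nsmult_in_monoid[OF M m]]
    monoid_hom_nsmult[OF f M m]
  by (simp add: zsmult_eq_nsmult_diff)

section \<open>Laplacians and degrees\<close>

text \<open>Connectivity is deliberately omitted: it is not established for the contraction.\<close>

definition torsion_free_graph ::
  "'x set \<Rightarrow> ('x \<Rightarrow> 'x) \<Rightarrow> ('x \<Rightarrow> 'x) \<Rightarrow> ('x \<Rightarrow> 'a::ab_group_add) \<Rightarrow> bool" where
  "torsion_free_graph X r i l \<longleftrightarrow> finite X \<and> vertices X r \<noteq> {} \<and>
    (\<forall>e\<in>halfedges X r. r e \<in> vertices X r \<and> i e \<in> halfedges X r \<and> i (i e) = e \<and>
       l (i e) = l e \<and> torsion_free (l e))"

lemma torsion_free_graph_finite: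
  assumes "torsion_free_graph X r i l"
  shows "finite (vertices X r)" "finite (halfedges X r)"
  using assms unfolding torsion_free_graph_def vertices_def halfedges_def by auto

definition slope :: "('x \<Rightarrow> 'x) \<Rightarrow> ('x \<Rightarrow> 'x) \<Rightarrow> ('x \<Rightarrow> 'a::ab_group_add) \<Rightarrow> ('x \<Rightarrow> 'a) \<Rightarrow> 'x \<Rightarrow> int" where
  "slope r i l g e = zdiv (g (r e) - g (r (i e))) (l e)"

lemma laplacian_eq_sum_slope:
  assumes "v \<in> vertices X r"
  shows "laplacian X r i l g v = (\<Sum>e\<in>{e \<in> halfedges X r. r e = v}. slope r i l g e)"
  using assms unfolding laplacian_def halfedges_at_def slope_def by (auto intro: sum.cong)

lemma PL_diff_zsmult:
  assumes "g \<in> PL M X r i l" "e \<in> halfedges X r"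
  obtains k where "g (r e) - g (r (i e)) = zsmult k (l e)"
  using assms unfolding PL_def zspan_def by auto

lemma slope_eq:
  assumes "torsion_free (l e)" "g (r e) - g (r (i e)) = zsmult k (l e)"
  shows "slope r i l g e = k"
  using assms zdiv_zsmult unfolding slope_def by simp

lemma slope_opposite:
  assumes G: "torsion_free_graph X r i l" and g: "g \<in> PL M X r i l" and e: "e \<in> halfedges X r"
  shows "slope r i l g (i e) = - slope r i l g e"
proof -
  obtain k where k: "g (r e) - g (r (i e)) = zsmult k (l e)"
    using PL_diff_zsmult[OF g e] .
  have ie: "i (i e) = e" "l (i e) = l e" and tf: "torsion_free (l e)"
    using G e unfolding torsion_free_graph_def by auto
  have "g (r (i e)) - g (r (i (i e))) = zsmult (- k) (l (i e))"
    unfolding ie zsmult_minus k[symmetric] by simp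
  then show ?thesis
    using slope_eq[of l e g r i k] slope_eq[of l "i e" g r i "- k"] tf k ie by simp
qed

lemma sum_involution_antisym_eq_0:
  assumes "finite T" and "\<And>e. e \<in> T \<Longrightarrow> i e \<in> T \<and> i (i e) = e \<and> \<phi> (i e) = - (\<phi> e :: int)"
  shows "sum \<phi> T = 0"
proof -
  have "bij_betw i T T"
    by (rule bij_betw_byWitness[where f' = i]) (use assms(2) in auto)
  then have "sum \<phi> T = sum (\<lambda>e. \<phi> (i e)) T" by (rule sum.reindex_bij_betw[symmetric])
  also have "\<dots> = - sum \<phi> T" using assms(2) by (simp add: sum_negf)
  finally show ?thesis by simp
qed

lemma deg_diff: "deg X r (A - B) = deg X r A - deg X r B"
  unfolding deg_def by (simp add: sum_subtractf)

lemma deg_add: "deg X r (\<lambda>x. A x + B x) = deg X r A + deg X r B"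
  unfolding deg_def by (simp add: sum.distrib)

lemma deg_nonneg: "(\<And>x. 0 \<le> E x) \<Longrightarrow> 0 \<le> deg X r E"
  unfolding deg_def by (simp add: sum_nonneg)

lemma deg_laplacian:
  assumes G: "torsion_free_graph X r i l" and g: "g \<in> PL M X r i l"
  shows "deg X r (laplacian X r i l g) = 0"
proof -
  let ?V = "vertices X r" and ?H = "halfedges X r"
  have "deg X r (laplacian X r i l g) = (\<Sum>v\<in>?V. \<Sum>e\<in>{e \<in> ?H. r e = v}. slope r i l g e)"
    unfolding deg_def by (simp add: laplacian_eq_sum_slope)
  also have "\<dots> = sum (slope r i l g) ?H"
    by (rule sum.group) (use G torsion_free_graph_finite[OF G] in \<open>auto simp: torsion_free_graph_def\<close>)
  also have "\<dots> = 0"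
  proof (rule sum_involution_antisym_eq_0[OF torsion_free_graph_finite(2)[OF G]])
    fix e
    assume "e \<in> ?H"
    then show "i e \<in> ?H \<and> i (i e) = e \<and> slope r i l g (i e) = - slope r i l g e"
      using G slope_opposite[OF G g] unfolding torsion_free_graph_def by blast
  qed
  finally show ?thesis .
qed

lemma deg_linsys:
  assumes "torsion_free_graph X r i l" "E \<in> linsys M X r i l D"
  shows "deg X r E = deg X r D"
proof -
  obtain g where "g \<in> PL M X r i l" "E - D = laplacian X r i l g"
    using assms(2) unfolding linsys_def lin_equiv_def by auto
  then show ?thesis using deg_laplacian[OF assms(1)] deg_diff[of X r E D] by simp
qed

lemma laplacian_0:
  assumes "torsion_free_graph X r i l"
  shows "laplacian X r i l (\<lambda>_. 0::'a::ab_group_add) = (\<lambda>_. 0)"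
proof
  fix v
  have slope_0: "slope r i l (\<lambda>_. 0::'a) e = 0" if "e \<in> halfedges X r" for e
    using slope_eq[of l e "\<lambda>_. 0" r i 0] assms that unfolding torsion_free_graph_def by auto
  show "laplacian X r i l (\<lambda>_. 0) v = 0"
  proof (cases "v \<in> vertices X r")
    case True
    then show ?thesis using slope_0 by (simp add: laplacian_eq_sum_slope)
  qed (simp add: laplacian_def)
qed

section \<open>Rank and divisorial gonality\<close>

lemma Greatest_int_bounded:
  fixes P :: "int \<Rightarrow> bool"
  assumes "P x" and "\<And>y. P y \<Longrightarrow> y \<le> b"
  shows "P (Greatest P)" and "P y \<Longrightarrow> y \<le> Greatest P"
proof -
  let ?S = "{y. P y \<and> x \<le> y}"
  have fin: "finite ?S" by (rule finite_subset[of _ "{x..b}"]) (use assms in auto)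
  have x: "x \<in> ?S" using assms by auto
  have greatest: "P (Max ?S) \<and> (\<forall>y. P y \<longrightarrow> y \<le> Max ?S)"
    using Max_in[OF fin] Max_ge[OF fin] x by (smt (verit) empty_iff mem_Collect_eq)
  then have "Greatest P = Max ?S" by (intro Greatest_equality) auto
  then show "P (Greatest P)" and "P y \<Longrightarrow> y \<le> Greatest P" using greatest by auto
qed

lemma Least_int_bounded:
  fixes P :: "int \<Rightarrow> bool"
  assumes "P x" and "\<And>y. P y \<Longrightarrow> b \<le> y"
  shows "P (Least P)" and "P y \<Longrightarrow> Least P \<le> y"
proof -
  let ?S = "{y. P y \<and> y \<le> x}"
  have fin: "finite ?S" by (rule finite_subset[of _ "{b..x}"]) (use assms in auto)
  have x: "x \<in> ?S" using assms by auto
  have least: "P (Min ?S) \<and> (\<forall>y. P y \<longrightarrow> Min ?S \<le> y)"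
    using Min_in[OF fin] Min_le[OF fin] x by (smt (verit) empty_iff mem_Collect_eq)
  then have "Least P = Min ?S" by (intro Least_equality) auto
  then show "P (Least P)" and "P y \<Longrightarrow> Least P \<le> y" using least by auto
qed

definition point_divisor :: "'x \<Rightarrow> int \<Rightarrow> 'x \<Rightarrow> int" where
  "point_divisor v k = (\<lambda>x. if x = v then k else 0)"

lemma point_divisor_eff:
  assumes "finite (vertices X r)" "v \<in> vertices X r" "0 \<le> k"
  shows "point_divisor v k \<in> eff_divisors X r k"
  using assms unfolding eff_divisors_def divisors_def deg_def point_divisor_def by auto

definition rank_ge ::
  "'a::ab_group_add set \<Rightarrow> 'x set \<Rightarrow> ('x \<Rightarrow> 'x) \<Rightarrow> ('x \<Rightarrow> 'x) \<Rightarrow> ('x \<Rightarrow> 'a)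
    \<Rightarrow> ('x \<Rightarrow> int) \<Rightarrow> int \<Rightarrow> bool" where
  "rank_ge M X r i l D k \<longleftrightarrow> (\<forall>F\<in>eff_divisors X r k. linsys M X r i l (D - F) \<noteq> {})"

lemma rank_ge_le_deg:
  assumes G: "torsion_free_graph X r i l" and D: "rank_ge M X r i l D k"
  shows "k \<le> max (deg X r D) 0"
proof (rule ccontr)
  assume "\<not> ?thesis"
  then have k: "0 < k" "deg X r D < k" by auto
  obtain v where v: "v \<in> vertices X r" using G unfolding torsion_free_graph_def by auto
  have F: "point_divisor v k \<in> eff_divisors X r k"
    using point_divisor_eff[OF torsion_free_graph_finite(1)[OF G] v] k by simp
  then obtain E where E: "E \<in> linsys M X r i l (D - point_divisor v k)"
    using D unfolding rank_ge_def by auto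
  have "deg X r E = deg X r D - k"
    using deg_linsys[OF G E] deg_diff[of X r D "point_divisor v k"] F
    unfolding eff_divisors_def by simp
  moreover have "0 \<le> deg X r E" using E unfolding linsys_def by (auto intro: deg_nonneg)
  ultimately show False using k by simp
qed

lemma rank_ge_minus_1: "rank_ge M X r i l D (- 1)"
  unfolding rank_ge_def
proof
  fix F
  assume "F \<in> eff_divisors X r (- 1)"
  then show "linsys M X r i l (D - F) \<noteq> {}"
    using deg_nonneg[of F X r] unfolding eff_divisors_def by auto
qed

lemma rank_ge_diff_1:
  assumes G: "torsion_free_graph X r i l" and D: "D \<in> divisors X r"
    and k: "rank_ge M X r i l D k"
  shows "rank_ge M X r i l D (k - 1)"
  unfolding rank_ge_def
proof
  fix F
  assume F: "F \<in> eff_divisors X r (k - 1)"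
  obtain v where v: "v \<in> vertices X r" using G unfolding torsion_free_graph_def by auto
  let ?p = "point_divisor v 1"
  have p: "?p \<in> eff_divisors X r 1"
    using point_divisor_eff[OF torsion_free_graph_finite(1)[OF G] v] by simp
  then have "(\<lambda>x. F x + ?p x) \<in> eff_divisors X r k"
    using F unfolding eff_divisors_def divisors_def by (auto simp: deg_add)
  then obtain E where E: "E \<in> linsys M X r i l (D - (\<lambda>x. F x + ?p x))"
    using k unfolding rank_ge_def by blast
  have "(\<lambda>x. E x + ?p x) - (D - F) = E - (D - (\<lambda>x. F x + ?p x))"
    by (auto simp: fun_diff_def algebra_simps)
  then have "(\<lambda>x. E x + ?p x) \<in> linsys M X r i l (D - F)"
    using E p F D unfolding linsys_def lin_equiv_def eff_divisors_def divisors_def by auto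
  then show "linsys M X r i l (D - F) \<noteq> {}" by blast
qed

lemma rank_ge_mono:
  assumes G: "torsion_free_graph X r i l" and D: "D \<in> divisors X r"
    and "j \<le> k" and "rank_ge M X r i l D k"
  shows "rank_ge M X r i l D j"
  using assms(3,4) by (induction j rule: int_le_induct) (use rank_ge_diff_1[OF G D] in auto)

lemma one_le_rank_iff:
  assumes G: "torsion_free_graph X r i l" and D: "D \<in> divisors X r"
  shows "1 \<le> rank M X r i l D \<longleftrightarrow> rank_ge M X r i l D 1"
proof -
  have rank: "rank M X r i l D = Greatest (rank_ge M X r i l D)"
    unfolding rank_def rank_ge_def by simp
  have "\<And>k. rank_ge M X r i l D k \<Longrightarrow> k \<le> max (deg X r D) 0"
    using rank_ge_le_deg[OF G] .
  note greatest = Greatest_int_bounded[of "rank_ge M X r i l D", OF rank_ge_minus_1 this]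
  show ?thesis
  proof
    assume "1 \<le> rank M X r i l D"
    then show "rank_ge M X r i l D 1"
      using rank_ge_mono[OF G D] greatest(1) unfolding rank by blast
  next
    assume "rank_ge M X r i l D 1"
    then show "1 \<le> rank M X r i l D" using greatest(2) unfolding rank by blast
  qed
qed

lemma deg_ge_1_if_rank:
  assumes G: "torsion_free_graph X r i l" and D: "D \<in> divisors X r"
    and "1 \<le> rank M X r i l D"
  shows "1 \<le> deg X r D"
  using rank_ge_le_deg[OF G] one_le_rank_iff[OF G D] assms(3) by fastforce

text \<open>Removing one chip from the all-ones divisor leaves it effective.\<close>

lemma rank_ge_1_vertex_sum:
  assumes G: "torsion_free_graph X r i l" and M: "0 \<in> M"
  shows "rank_ge M X r i l (\<lambda>x. if x \<in> vertices X r then 1 else 0) 1"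
  unfolding rank_ge_def
proof
  let ?D = "\<lambda>x. if x \<in> vertices X r then 1 else 0 :: int"
  fix F
  assume F: "F \<in> eff_divisors X r 1"
  have "F x \<le> 1" for x
  proof (cases "x \<in> vertices X r")
    case True
    then have "F x \<le> sum F (vertices X r)"
      using F torsion_free_graph_finite[OF G] by (intro member_le_sum) (auto simp: eff_divisors_def)
    then show ?thesis using F unfolding eff_divisors_def deg_def by simp
  next
    case False
    then show ?thesis using F unfolding eff_divisors_def divisors_def by auto
  qed
  then have "?D - F \<in> divisors X r" "\<forall>x. 0 \<le> (?D - F) x"
    using F unfolding eff_divisors_def divisors_def by auto
  moreover have "(\<lambda>_. 0) \<in> PL M X r i l"
    unfolding PL_def gp_def zspan_def using M by (auto intro!: range_eqI[of _ _ 0])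
  ultimately have "?D - F \<in> linsys M X r i l (?D - F)"
    unfolding linsys_def lin_equiv_def using laplacian_0[OF G] by force
  then show "linsys M X r i l (?D - F) \<noteq> {}" by blast
qed

lemma dgon_attained:
  assumes G: "torsion_free_graph X r i l" and M: "0 \<in> M"
  obtains D where "D \<in> divisors X r" "deg X r D = dgon M X r i l" "1 \<le> rank M X r i l D"
proof -
  let ?P = "\<lambda>d. \<exists>D\<in>divisors X r. deg X r D = d \<and> 1 \<le> rank M X r i l D"
  let ?D = "\<lambda>x. if x \<in> vertices X r then 1 else 0 :: int"
  have "?D \<in> divisors X r" unfolding divisors_def by auto
  then have "?P (deg X r ?D)"
    using one_le_rank_iff[OF G] rank_ge_1_vertex_sum[OF G M] by blast
  then have "?P (Least ?P)"
    by (rule Least_int_bounded) (use deg_ge_1_if_rank[OF G] in blast)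
  then show ?thesis using that unfolding dgon_def by blast
qed

lemma dgon_le_deg:
  assumes G: "torsion_free_graph X r i l" and D: "D \<in> divisors X r"
    and rank: "rank_ge M X r i l D 1"
  shows "dgon M X r i l \<le> deg X r D"
  unfolding dgon_def
  by (rule Least_int_bounded(2))
    (use D rank one_le_rank_iff[OF G] deg_ge_1_if_rank[OF G] in blast)+

section \<open>Edge contraction\<close>

locale contraction =
  fixes M :: "'a::ab_group_add set" and N :: "'b::ab_group_add set" and X :: "'x set"
    and r i :: "'x \<Rightarrow> 'x" and l :: "'x \<Rightarrow> 'a" and f :: "'a \<Rightarrow> 'b"
  assumes M_sharp: "sharp_integral_monoid M" and N_sharp: "sharp_integral_monoid N"
    and graph: "metrised_graph M X r i l" and hom: "monoid_hom M N f"
begin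

abbreviation "V \<equiv> vertices X r"
abbreviation "H \<equiv> halfedges X r"
abbreviation "R \<equiv> contr_rel f X r i l"
abbreviation "X' \<equiv> contr_X f X r i l"
abbreviation "r' \<equiv> contr_r f X r i l"
abbreviation "i' \<equiv> contr_i f X r i l"
abbreviation "l' \<equiv> contr_l f X r i l"
abbreviation "V' \<equiv> vertices X' r'"
abbreviation "H' \<equiv> halfedges X' r'"

lemma X_finite: "finite X" and V_nonempty: "V \<noteq> {}"
  using graph unfolding metrised_graph_def is_graph_def by auto

lemma V_subset_X: "V \<subseteq> X" and H_subset_X: "H \<subseteq> X"
  unfolding vertices_def halfedges_def by auto

lemma r_in_V: "x \<in> X \<Longrightarrow> r x \<in> V"
  using graph unfolding metrised_graph_def is_graph_def vertices_def by auto

lemma i_in_X: "x \<in> X \<Longrightarrow> i x \<in> X"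
  using graph unfolding metrised_graph_def is_graph_def by auto

lemma i_i [simp]: "x \<in> X \<Longrightarrow> i (i x) = x"
  using graph unfolding metrised_graph_def is_graph_def by auto

lemma l_i [simp]: "x \<in> X \<Longrightarrow> l (i x) = l x"
  using graph unfolding metrised_graph_def by auto

lemma l_in_M: "x \<in> X \<Longrightarrow> l x \<in> M"
  using graph unfolding metrised_graph_def by auto

lemma l_eq_0_iff: "x \<in> X \<Longrightarrow> l x = 0 \<longleftrightarrow> x \<in> V"
  using graph unfolding metrised_graph_def by auto

lemma i_eq_iff: "x \<in> X \<Longrightarrow> i x = x \<longleftrightarrow> x \<in> V"
  using graph unfolding metrised_graph_def is_graph_def vertices_def by auto

lemma i_in_H:
  assumes "e \<in> H"
  shows "i e \<in> H"
proof -
  have e: "e \<in> X" "e \<notin> V" using assms unfolding halfedges_def by auto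
  have "i e \<notin> V"
  proof
    assume "i e \<in> V"
    then have "i (i e) = i e" using i_eq_iff i_in_X e(1) by blast
    then have "i e = e" using e(1) by simp
    then show False using e i_eq_iff by blast
  qed
  then show ?thesis using i_in_X e(1) unfolding halfedges_def by auto
qed

lemma torsion_free_graph_X: "torsion_free_graph X r i l"
  unfolding torsion_free_graph_def
proof (intro conjI ballI X_finite V_nonempty)
  fix e
  assume e: "e \<in> H"
  then have eX: "e \<in> X" using H_subset_X by auto
  show "r e \<in> V" by (rule r_in_V[OF eX])
  show "i e \<in> H" by (rule i_in_H[OF e])
  show "i (i e) = e" "l (i e) = l e" using eX by simp_all
  have "l e \<noteq> 0" using l_eq_0_iff[OF eX] e unfolding halfedges_def by auto
  then show "torsion_free (l e)" by (rule torsion_free_if_sharp[OF M_sharp l_in_M[OF eX]])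
qed

definition collapsed :: "'x set" where
  "collapsed = V \<union> {e \<in> H. f (l e) = 0}"

definition surviving :: "'x set" where
  "surviving = {e \<in> H. f (l e) \<noteq> 0}"

definition contr_gen :: "('x \<times> 'x) set" where
  "contr_gen = {(e, y) | e y. e \<in> H \<and> f (l e) = 0 \<and> y \<in> {r e, i e, r (i e)}}"

definition cls :: "'x \<Rightarrow> 'x set" where
  "cls x = R `` {x}"

lemma R_eq: "R = Id_on X \<union> (contr_gen \<union> contr_gen\<inverse>)\<^sup>+"
  unfolding contr_rel_def contr_gen_def Let_def by simp

lemma collapsed_subset_X: "collapsed \<subseteq> X"
  using V_subset_X H_subset_X unfolding collapsed_def by auto

lemma surviving_subset_H: "surviving \<subseteq> H"
  unfolding surviving_def by auto

lemma X_collapsed_or_surviving: "x \<in> X \<Longrightarrow> x \<in> collapsed \<longleftrightarrow> x \<notin> surviving"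
  unfolding collapsed_def surviving_def halfedges_def by auto

lemma i_surviving: "e \<in> surviving \<Longrightarrow> i e \<in> surviving"
  using i_in_H H_subset_X unfolding surviving_def by auto

lemma R_cases:
  assumes "(x, y) \<in> R"
  shows "x = y \<and> x \<in> X \<or> x \<in> collapsed \<and> y \<in> collapsed"
proof -
  have "contr_gen \<union> contr_gen\<inverse> \<subseteq> collapsed \<times> collapsed"
    using r_in_V i_in_H H_subset_X unfolding contr_gen_def collapsed_def by auto
  then have "(contr_gen \<union> contr_gen\<inverse>)\<^sup>+ \<subseteq> collapsed \<times> collapsed"
    by (rule trancl_subset_Sigma)
  then show ?thesis using assms unfolding R_eq by auto
qed

lemma R_equiv: "equiv X R"
proof (rule equivI)
  show "R \<subseteq> X \<times> X"
  proof (rule subrelI)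
    fix x y
    assume "(x, y) \<in> R"
    then show "(x, y) \<in> X \<times> X" using R_cases collapsed_subset_X by blast
  qed
  show "refl_on X R" unfolding R_eq refl_on_def by auto
  have "sym ((contr_gen \<union> contr_gen\<inverse>)\<^sup>+)" by (rule sym_trancl) (auto simp: sym_def)
  then show "sym R" unfolding R_eq sym_def by auto
  show "trans R" unfolding R_eq trans_def by (auto intro: trancl_trans)
qed

lemma collapsed_R_r:
  assumes "x \<in> collapsed"
  shows "(x, r x) \<in> R"
proof (cases "x \<in> V")
  case True
  then show ?thesis using V_subset_X unfolding R_eq vertices_def by auto
next
  case False
  then have "(x, r x) \<in> contr_gen" using assms unfolding collapsed_def contr_gen_def by auto
  then show ?thesis unfolding R_eq by auto
qed

lemma collapsed_R_i:
  assumes "x \<in> collapsed"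
  shows "(x, i x) \<in> R"
proof (cases "x \<in> V")
  case True
  then have "i x = x" "x \<in> X" using i_eq_iff V_subset_X by auto
  then show ?thesis unfolding R_eq by auto
next
  case False
  then have "(x, i x) \<in> contr_gen" using assms unfolding collapsed_def contr_gen_def by auto
  then show ?thesis unfolding R_eq by auto
qed

lemma R_refl: "x \<in> X \<Longrightarrow> (x, x) \<in> R"
  using R_equiv unfolding equiv_def refl_on_def by blast

lemma R_sym: "(x, y) \<in> R \<Longrightarrow> (y, x) \<in> R"
  using R_equiv unfolding equiv_def sym_def by blast

lemma R_trans: "(x, y) \<in> R \<Longrightarrow> (y, z) \<in> R \<Longrightarrow> (x, z) \<in> R"
  using R_equiv unfolding equiv_def trans_def by blast

lemma R_r:
  assumes "(x, y) \<in> R"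
  shows "(r x, r y) \<in> R"
  using R_cases[OF assms]
proof
  assume "x = y \<and> x \<in> X"
  then show ?thesis using R_refl r_in_V V_subset_X by blast
next
  assume "x \<in> collapsed \<and> y \<in> collapsed"
  then show ?thesis using collapsed_R_r R_sym R_trans assms by meson
qed

lemma R_i:
  assumes "(x, y) \<in> R"
  shows "(i x, i y) \<in> R"
  using R_cases[OF assms]
proof
  assume "x = y \<and> x \<in> X"
  then show ?thesis using R_refl i_in_X by blast
next
  assume "x \<in> collapsed \<and> y \<in> collapsed"
  then show ?thesis using collapsed_R_i R_sym R_trans assms by meson
qed

lemma cls_self: "x \<in> X \<Longrightarrow> x \<in> cls x"
  unfolding cls_def by (rule equiv_class_self[OF R_equiv])

lemma cls_eq_iff: "x \<in> X \<Longrightarrow> y \<in> X \<Longrightarrow> cls x = cls y \<longleftrightarrow> (x, y) \<in> R"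
  unfolding cls_def by (rule eq_equiv_class_iff[OF R_equiv])

lemma cls_surviving: "e \<in> surviving \<Longrightarrow> cls e = {e}"
  using R_cases cls_self H_subset_X surviving_subset_H X_collapsed_or_surviving
  unfolding cls_def by blast

lemma X'_eq: "X' = cls ` X"
  unfolding contr_X_def quotient_def cls_def by auto

lemma r'_cls: "x \<in> X \<Longrightarrow> r' (cls x) = cls (r x)"
  unfolding contr_r_def cls_def
  using R_r equiv_class_eq[OF R_equiv] equiv_class_self[OF R_equiv] by blast

lemma i'_cls: "x \<in> X \<Longrightarrow> i' (cls x) = cls (i x)"
  unfolding contr_i_def cls_def
  using R_i equiv_class_eq[OF R_equiv] equiv_class_self[OF R_equiv] by blast

lemma cls_in_V'_iff:
  assumes x: "x \<in> X"
  shows "cls x \<in> V' \<longleftrightarrow> x \<in> collapsed"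
proof
  assume "x \<in> collapsed"
  then have "cls (r x) = cls x"
    using collapsed_R_r cls_eq_iff r_in_V V_subset_X x R_sym by blast
  then show "cls x \<in> V'" using r'_cls[OF x] X'_eq x unfolding vertices_def by auto
next
  assume V': "cls x \<in> V'"
  show "x \<in> collapsed"
  proof (rule ccontr)
    assume "x \<notin> collapsed"
    then have x_surv: "x \<in> surviving" using X_collapsed_or_surviving x by blast
    then have "r x \<in> cls x" using V' r'_cls[OF x] cls_self r_in_V V_subset_X x
      unfolding vertices_def by fastforce
    then have "r x = x" using cls_surviving[OF x_surv] by simp
    then show False using x x_surv surviving_subset_H unfolding halfedges_def vertices_def by auto
  qed
qed

lemma V'_eq: "V' = cls ` V"
proof
  show "cls ` V \<subseteq> V'"
    using cls_in_V'_iff V_subset_X unfolding collapsed_def by auto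
  show "V' \<subseteq> cls ` V"
  proof
    fix C
    assume C: "C \<in> V'"
    then obtain x where x: "x \<in> X" "C = cls x" using X'_eq unfolding vertices_def by auto
    then have "x \<in> collapsed" using C cls_in_V'_iff by blast
    then have "cls x = cls (r x)" using collapsed_R_r cls_eq_iff r_in_V V_subset_X x by blast
    then show "C \<in> cls ` V" using x r_in_V by auto
  qed
qed

lemma H'_eq: "H' = cls ` surviving"
proof -
  have "H' = cls ` X - V'" unfolding halfedges_def X'_eq by simp
  also have "\<dots> = cls ` surviving"
    using cls_in_V'_iff X_collapsed_or_surviving surviving_subset_H H_subset_X by auto
  finally show ?thesis .
qed

lemma l'_cls: "e \<in> surviving \<Longrightarrow> l' (cls e) = f (l e)"
  unfolding contr_l_def by (simp add: cls_surviving)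

lemma torsion_free_graph_X': "torsion_free_graph X' r' i' l'"
  unfolding torsion_free_graph_def
proof (intro conjI ballI)
  show "finite X'" using X'_eq X_finite by simp
  show "V' \<noteq> {}" using V'_eq V_nonempty by simp
  fix C
  assume "C \<in> H'"
  then obtain e where e: "e \<in> surviving" and C: "C = cls e" using H'_eq by auto
  have eX: "e \<in> X" and ieX: "i e \<in> X" and ie: "i e \<in> surviving"
    using e i_surviving surviving_subset_H H_subset_X by auto
  show "r' C \<in> V'" using r'_cls[OF eX] r_in_V[OF eX] C V'_eq by simp
  show "i' C \<in> H'" using i'_cls[OF eX] C ie H'_eq by simp
  show "i' (i' C) = C" using i'_cls[OF eX] i'_cls[OF ieX] C eX by simp
  show "l' (i' C) = l' C" using i'_cls[OF eX] C l'_cls[OF e] l'_cls[OF ie] eX by simp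
  have "f (l e) \<in> N" "f (l e) \<noteq> 0"
    using hom l_in_M[OF eX] e unfolding monoid_hom_def surviving_def by auto
  then show "torsion_free (l' C)" using torsion_free_if_sharp[OF N_sharp] l'_cls[OF e] C by simp
qed

end

section \<open>Push-forward along the contraction\<close>

context contraction
begin

lemma V_finite: "finite V"
  using torsion_free_graph_finite(1)[OF torsion_free_graph_X] .

lemma V'_finite: "finite V'"
  using torsion_free_graph_finite(1)[OF torsion_free_graph_X'] .

definition push :: "('x \<Rightarrow> int) \<Rightarrow> 'x set \<Rightarrow> int" where
  "push D = (\<lambda>C. if C \<in> V' then sum D {v \<in> V. cls v = C} else 0)"

lemma push_in_divisors: "push D \<in> divisors X' r'"
  unfolding push_def divisors_def by auto

lemma deg_push: "deg X' r' (push D) = deg X r D"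
proof -
  have "deg X' r' (push D) = (\<Sum>C\<in>V'. sum D {v \<in> V. cls v = C})"
    unfolding deg_def push_def by simp
  also have "\<dots> = sum D V"
    by (rule sum.group) (use V_finite V'_finite V'_eq in auto)
  finally show ?thesis unfolding deg_def .
qed

lemma push_diff: "push (A - B) = push A - push B"
  unfolding push_def by (auto simp: fun_diff_def sum_subtractf)

lemma push_nonneg: "(\<And>x. 0 \<le> E x) \<Longrightarrow> 0 \<le> push E C"
  unfolding push_def by (auto intro: sum_nonneg)

lemma eff_divisor_lift:
  assumes F': "F' \<in> eff_divisors X' r' k"
  obtains F where "F \<in> eff_divisors X r k" "push F = F'"
proof -
  have "\<forall>C\<in>V'. \<exists>v. v \<in> V \<and> cls v = C" using V'_eq by auto
  then obtain rep where rep: "\<And>C. C \<in> V' \<Longrightarrow> rep C \<in> V \<and> cls (rep C) = C"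
    by metis
  define F where "F v = (if v \<in> V \<and> v = rep (cls v) then F' (cls v) else 0)" for v
  have "push F = F'"
  proof
    fix C
    show "push F C = F' C"
    proof (cases "C \<in> V'")
      case True
      have "sum F {v \<in> V. cls v = C} = (\<Sum>v\<in>{v \<in> V. cls v = C}. if v = rep C then F' C else 0)"
        unfolding F_def by (rule sum.cong) auto
      also have "\<dots> = F' C"
        using rep[OF True] V_finite by (subst sum.delta) auto
      finally show ?thesis unfolding push_def using True by simp
    next
      case False
      then show ?thesis using F' unfolding push_def eff_divisors_def divisors_def by auto
    qed
  qed
  moreover have "deg X r F = k"
    using F' deg_push[of F] \<open>push F = F'\<close> unfolding eff_divisors_def by simp
  moreover have "F \<in> divisors X r" "\<forall>x. 0 \<le> F x"
    using F' unfolding eff_divisors_def divisors_def F_def by auto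
  ultimately show ?thesis using that unfolding eff_divisors_def by blast
qed

definition push_PL :: "('x \<Rightarrow> 'a) \<Rightarrow> 'x set \<Rightarrow> 'b" where
  "push_PL g C = (if C \<in> V' then gp_ext M f (g (SOME v. v \<in> C \<and> v \<in> V)) else 0)"

lemma gp_ext_PL_diff:
  assumes g: "g \<in> PL M X r i l" and e: "e \<in> H"
    and k: "g (r e) - g (r (i e)) = zsmult k (l e)"
  shows "gp_ext M f (g (r e)) - gp_ext M f (g (r (i e))) = zsmult k (f (l e))"
proof -
  have "r e \<in> V" "r (i e) \<in> V" using e i_in_H H_subset_X r_in_V by auto
  then have "gp_ext M f (g (r e)) - gp_ext M f (g (r (i e))) = gp_ext M f (g (r e) - g (r (i e)))"
    using gp_ext_minus[OF hom M_sharp] g unfolding PL_def by simp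
  also have "\<dots> = zsmult k (f (l e))"
    unfolding k using gp_ext_zsmult[OF hom M_sharp] l_in_M e H_subset_X by auto
  finally show ?thesis .
qed

lemma r_r: "x \<in> X \<Longrightarrow> r (r x) = r x"
  using r_in_V unfolding vertices_def by auto

lemma gp_ext_PL_respects_R:
  assumes g: "g \<in> PL M X r i l" and xy: "(x, y) \<in> R"
  shows "gp_ext M f (g (r x)) = gp_ext M f (g (r y))"
proof -
  let ?h = "\<lambda>x. gp_ext M f (g (r x))"
  have gen: "?h a = ?h b" if ab: "(a, b) \<in> contr_gen" for a b
  proof -
    obtain e where e: "a = e" "e \<in> H" "f (l e) = 0" "b \<in> {r e, i e, r (i e)}"
      using ab unfolding contr_gen_def by blast
    obtain k where "g (r e) - g (r (i e)) = zsmult k (l e)"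
      using PL_diff_zsmult[OF g e(2)] .
    then have "?h e = ?h (i e)" using gp_ext_PL_diff[OF g e(2)] e(3) by simp
    moreover have "i e \<in> X" "e \<in> X" using e(2) i_in_H H_subset_X by auto
    ultimately show ?thesis using e(1,4) r_r by auto
  qed
  have "?h a = ?h b" if "(a, b) \<in> (contr_gen \<union> contr_gen\<inverse>)\<^sup>+" for a b
    using that by (induction rule: trancl_induct) (auto dest: gen)
  then show ?thesis using xy unfolding R_eq by auto
qed

lemma push_PL_cls:
  assumes g: "g \<in> PL M X r i l" and v: "v \<in> V"
  shows "push_PL g (cls v) = gp_ext M f (g v)"
proof -
  define w where "w = (SOME w. w \<in> cls v \<and> w \<in> V)"
  have "w \<in> cls v \<and> w \<in> V"
    unfolding w_def by (rule someI[of _ v]) (use v V_subset_X cls_self in blast)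
  then have "(v, w) \<in> R" "r v = v" "r w = w" using v unfolding cls_def vertices_def by auto
  then have "gp_ext M f (g w) = gp_ext M f (g v)" using gp_ext_PL_respects_R[OF g] by metis
  moreover have "cls v \<in> V'" using V'_eq v by simp
  ultimately show ?thesis unfolding push_PL_def w_def by simp
qed

lemma push_PL_diff:
  assumes g: "g \<in> PL M X r i l" and e: "e \<in> surviving"
    and k: "g (r e) - g (r (i e)) = zsmult k (l e)"
  shows "push_PL g (r' (cls e)) - push_PL g (r' (i' (cls e))) = zsmult k (l' (cls e))"
proof -
  have eH: "e \<in> H" and eX: "e \<in> X" and ieX: "i e \<in> X"
    using e surviving_subset_H H_subset_X i_in_H by auto
  have "r' (cls e) = cls (r e)" "r' (i' (cls e)) = cls (r (i e))"
    using r'_cls[OF eX] i'_cls[OF eX] r'_cls[OF ieX] by simp_all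
  then show ?thesis
    using push_PL_cls[OF g r_in_V[OF eX]] push_PL_cls[OF g r_in_V[OF ieX]]
      gp_ext_PL_diff[OF g eH k] l'_cls[OF e] by simp
qed

lemma push_PL_in_PL:
  assumes g: "g \<in> PL M X r i l"
  shows "push_PL g \<in> PL N X' r' i' l'"
  unfolding PL_def
proof (intro CollectI conjI ballI allI impI)
  fix C
  assume "C \<in> V'"
  then obtain v where v: "v \<in> V" "C = cls v" using V'_eq by auto
  then have "g v \<in> gp M" using g unfolding PL_def by auto
  then show "push_PL g C \<in> gp N" using push_PL_cls[OF g v(1)] v(2) gp_ext_in_gp[OF hom] by simp
next
  fix C
  assume "C \<notin> V'"
  then show "push_PL g C = 0" unfolding push_PL_def by simp
next
  fix C
  assume "C \<in> H'"
  then obtain e where e: "e \<in> surviving" "C = cls e" using H'_eq by auto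
  obtain k where "g (r e) - g (r (i e)) = zsmult k (l e)"
    using PL_diff_zsmult[OF g] e(1) surviving_subset_H by blast
  then show "push_PL g (r' C) - push_PL g (r' (i' C)) \<in> zspan (l' C)"
    using push_PL_diff[OF g e(1)] e(2) unfolding zspan_def by auto
qed

lemma slope_push_PL:
  assumes g: "g \<in> PL M X r i l" and e: "e \<in> surviving"
  shows "slope r' i' l' (push_PL g) (cls e) = slope r i l g e"
proof -
  obtain k where k: "g (r e) - g (r (i e)) = zsmult k (l e)"
    using PL_diff_zsmult[OF g] e surviving_subset_H by blast
  have "torsion_free (l e)"
    using torsion_free_graph_X e surviving_subset_H unfolding torsion_free_graph_def by auto
  moreover have "torsion_free (l' (cls e))"
    using torsion_free_graph_X' e H'_eq unfolding torsion_free_graph_def by auto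
  ultimately show ?thesis
    using slope_eq[of l e g r i k] push_PL_diff[OF g e k] k
      slope_eq[of l' "cls e" "push_PL g" r' i' k] by simp
qed

lemma sum_slope_collapsed_halfedges:
  assumes g: "g \<in> PL M X r i l"
  shows "sum (slope r i l g) {e \<in> H. f (l e) = 0 \<and> cls (r e) = C} = 0"
proof (rule sum_involution_antisym_eq_0)
  show "finite {e \<in> H. f (l e) = 0 \<and> cls (r e) = C}"
    using torsion_free_graph_finite(2)[OF torsion_free_graph_X] by simp
  fix e
  assume "e \<in> {e \<in> H. f (l e) = 0 \<and> cls (r e) = C}"
  then have e: "e \<in> H" "f (l e) = 0" "cls (r e) = C" by auto
  have ie: "i e \<in> H" "i e \<in> X" "e \<in> X" using e(1) i_in_H H_subset_X by auto
  then have "e \<in> collapsed" "i e \<in> collapsed" using e(1,2) unfolding collapsed_def by auto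
  then have "(r e, r (i e)) \<in> R"
    using collapsed_R_r collapsed_R_i R_sym R_trans by meson
  then have "cls (r (i e)) = C" using cls_eq_iff r_in_V V_subset_X ie e(3) by blast
  then show "i e \<in> {e \<in> H. f (l e) = 0 \<and> cls (r e) = C} \<and> i (i e) = e \<and>
      slope r i l g (i e) = - slope r i l g e"
    using ie e(2) slope_opposite[OF torsion_free_graph_X g e(1)] by simp
qed

lemma laplacian_push:
  assumes g: "g \<in> PL M X r i l"
  shows "push (laplacian X r i l g) = laplacian X' r' i' l' (push_PL g)"
proof
  fix C
  show "push (laplacian X r i l g) C = laplacian X' r' i' l' (push_PL g) C"
  proof (cases "C \<in> V'")
    case False
    then show ?thesis unfolding push_def laplacian_def by simp
  next
    case True
    let ?slope = "slope r i l g" and ?slope' = "slope r' i' l' (push_PL g)"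
    let ?S = "{e \<in> surviving. cls (r e) = C}"
      and ?T = "{e \<in> H. f (l e) = 0 \<and> cls (r e) = C}"
    have H_finite: "finite H" using torsion_free_graph_finite(2)[OF torsion_free_graph_X] .
    have "push (laplacian X r i l g) C = (\<Sum>v\<in>{v \<in> V. cls v = C}. \<Sum>e\<in>{e \<in> H. r e = v}. ?slope e)"
      unfolding push_def using True by (simp add: laplacian_eq_sum_slope)
    also have "\<dots> = (\<Sum>v\<in>{v \<in> V. cls v = C}. \<Sum>e\<in>{e \<in> {e \<in> H. cls (r e) = C}. r e = v}. ?slope e)"
      by (intro sum.cong) auto
    also have "\<dots> = sum ?slope {e \<in> H. cls (r e) = C}"
      by (rule sum.group) (use H_finite V_finite r_in_V H_subset_X in auto)
    also have "{e \<in> H. cls (r e) = C} = ?S \<union> ?T"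
      unfolding surviving_def by auto
    also have "sum ?slope (?S \<union> ?T) = sum ?slope ?S + sum ?slope ?T"
      by (rule sum.union_disjoint) (use H_finite in \<open>auto simp: surviving_def\<close>)
    also have "\<dots> = (\<Sum>e\<in>?S. ?slope' (cls e))"
      using sum_slope_collapsed_halfedges[OF g] slope_push_PL[OF g] by simp
    also have "\<dots> = sum ?slope' (cls ` ?S)"
      by (rule sum.reindex[symmetric, unfolded comp_def]) (auto simp: inj_on_def cls_surviving)
    also have "cls ` ?S = {C' \<in> H'. r' C' = C}"
      using H'_eq r'_cls surviving_subset_H H_subset_X by auto
    also have "sum ?slope' {C' \<in> H'. r' C' = C} = laplacian X' r' i' l' (push_PL g) C"
      using True by (simp add: laplacian_eq_sum_slope)
    finally show ?thesis .
  qed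
qed

lemma push_linsys:
  assumes E: "E \<in> linsys M X r i l D"
  shows "push E \<in> linsys N X' r' i' l' (push D)"
proof -
  obtain g where g: "g \<in> PL M X r i l" and EDg: "E - D = laplacian X r i l g"
    and E_nonneg: "\<forall>x. 0 \<le> E x"
    using E unfolding linsys_def lin_equiv_def by blast
  have "push E - push D = laplacian X' r' i' l' (push_PL g)"
    using EDg laplacian_push[OF g] push_diff by metis
  then show ?thesis
    using push_in_divisors push_nonneg E_nonneg push_PL_in_PL[OF g]
    unfolding linsys_def lin_equiv_def by blast
qed

lemma rank_ge_push:
  assumes "rank_ge M X r i l D k"
  shows "rank_ge N X' r' i' l' (push D) k"
  unfolding rank_ge_def
proof
  fix F'
  assume "F' \<in> eff_divisors X' r' k"
  then obtain F where F: "F \<in> eff_divisors X r k" "push F = F'" by (rule eff_divisor_lift)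
  then obtain E where "E \<in> linsys M X r i l (D - F)"
    using assms unfolding rank_ge_def by blast
  then have "push E \<in> linsys N X' r' i' l' (push D - F')"
    using push_linsys push_diff F(2) by metis
  then show "linsys N X' r' i' l' (push D - F') \<noteq> {}" by blast
qed

theorem dgon_contraction_le: "dgon N X' r' i' l' \<le> dgon M X r i l"
proof -
  have "0 \<in> M" using M_sharp unfolding sharp_integral_monoid_def by simp
  then obtain D where D: "D \<in> divisors X r" "deg X r D = dgon M X r i l" "1 \<le> rank M X r i l D"
    by (rule dgon_attained[OF torsion_free_graph_X])
  then have "rank_ge N X' r' i' l' (push D) 1"
    using one_le_rank_iff[OF torsion_free_graph_X] rank_ge_push by blast
  then have "dgon N X' r' i' l' \<le> deg X' r' (push D)"
    by (rule dgon_le_deg[OF torsion_free_graph_X' push_in_divisors])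
  then show ?thesis using deg_push D(2) by simp
qed

end

theorem corollary4p6:
  fixes M :: "'a::ab_group_add set" and N :: "'b::ab_group_add set"
    and X :: "'x set" and r i :: "'x \<Rightarrow> 'x" and l :: "'x \<Rightarrow> 'a" and f :: "'a \<Rightarrow> 'b"
  assumes "sharp_integral_monoid M" and "sharp_integral_monoid N"
    and "metrised_graph M X r i l"
    and "monoid_hom M N f"
  shows "dgon N (contr_X f X r i l) (contr_r f X r i l) (contr_i f X r i l) (contr_l f X r i l)
           \<le> dgon M X r i l"
proof -
  interpret contraction M N X r i l f
    using assms by unfold_locales
  show ?thesis by (rule dgon_contraction_le)
qed

end
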